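(* Let $\lambda_1(u),\lambda_2(u)$ be formal series $\lambda_i(u)=1+\lambda_i^{(1)}u^{-1}+\lambda_i^{(2)}u^{-2}+\cdots$ with $\lambda_i^{(r)}\in\mathbb{C}$, such that the ratio $\lambda_1(u)/\lambda_2(u)$ is the Laurent expansion at $u=\infty$ of a rational function in $u$. Then the Verma module $M(\lambda_1(u),\lambda_2(u))$ over $\mathrm{Y}(\mathfrak{gl}_2)$ is reducible.
   Context: The Yangian $\mathrm{Y}(\mathfrak{gl}_2)$ is the associative algebra over $\mathbb{C}$ with generators $t_{ij}^{(r)}$, $i,j\in\{1,2\}$, $r\ge1$, and defining relations $[t_{ij}^{(r+1)},t_{kl}^{(s)}]-[t_{ij}^{(r)},t_{kl}^{(s+1)}]=t_{kj}^{(r)}t_{il}^{(s)}-t_{kj}^{(s)}t_{il}^{(r)}$ for $r,s\ge0$, where $t_{ij}^{(0)}=\delta_{ij}$. The Verma module $M(\lambda_1(u),\lambda_2(u))$ is the quotient of $\mathrm{Y}(\mathfrak{gl}_2)$ by the left ideal generated by $t_{12}^{(r)}$, $t_{11}^{(r)}-\lambda_1^{(r)}$, $t_{22}^{(r)}-\lambda_2^{(r)}$, $r\ge1$. *)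

theory Defs
  imports "HOL-Computational_Algebra.Polynomial_FPS"
begin

datatype idx = I1 | I2

text \<open>Gen i j r stands for the generator t_ij^(r).  The symbol with r = 0 is
  included as a free generator but identified with delta_ij by a relation below.\<close>
datatype gen = Gen idx idx nat

type_synonym fa = "gen list \<Rightarrow> complex"

definition fa_carrier :: "fa set" where
  "fa_carrier = {f. finite {w. f w \<noteq> 0}}"

definition fa_zero :: fa where "fa_zero = (\<lambda>w. 0)"
definition fa_one :: fa where "fa_one = (\<lambda>w. if w = [] then 1 else 0)"
definition fa_add :: "fa \<Rightarrow> fa \<Rightarrow> fa" where "fa_add f g = (\<lambda>w. f w + g w)"
definition fa_sub :: "fa \<Rightarrow> fa \<Rightarrow> fa" where "fa_sub f g = (\<lambda>w. f w - g w)"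
definition fa_smult :: "complex \<Rightarrow> fa \<Rightarrow> fa" where "fa_smult c f = (\<lambda>w. c * f w)"
definition fa_mult :: "fa \<Rightarrow> fa \<Rightarrow> fa" where
  "fa_mult f g = (\<lambda>w. \<Sum>k\<le>length w. f (take k w) * g (drop k w))"
definition fa_comm :: "fa \<Rightarrow> fa \<Rightarrow> fa" where
  "fa_comm f g = fa_sub (fa_mult f g) (fa_mult g f)"

definition tg :: "idx \<Rightarrow> idx \<Rightarrow> nat \<Rightarrow> fa" where
  "tg i j r = (\<lambda>w. if w = [Gen i j r] then 1 else 0)"

definition kdelta :: "idx \<Rightarrow> idx \<Rightarrow> fa" where
  "kdelta i j = (if i = j then fa_one else fa_zero)"

definition yangian_rels :: "fa set" where
  "yangian_rels =
     {fa_sub (tg i j 0) (kdelta i j) | i j. True} \<union>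
     {fa_sub (fa_sub (fa_comm (tg i j (Suc r)) (tg k l s)) (fa_comm (tg i j r) (tg k l (Suc s))))
             (fa_sub (fa_mult (tg k j r) (tg i l s)) (fa_mult (tg k j s) (tg i l r)))
      | i j k l r s. True}"

inductive_set two_sided_ideal :: "fa set \<Rightarrow> fa set" for R where
  zero: "fa_zero \<in> two_sided_ideal R"
| gen: "x \<in> R \<Longrightarrow> a \<in> fa_carrier \<Longrightarrow> b \<in> fa_carrier \<Longrightarrow>
        fa_mult (fa_mult a x) b \<in> two_sided_ideal R"
| add: "x \<in> two_sided_ideal R \<Longrightarrow> y \<in> two_sided_ideal R \<Longrightarrow> fa_add x y \<in> two_sided_ideal R"
| smult: "x \<in> two_sided_ideal R \<Longrightarrow> fa_smult c x \<in> two_sided_ideal R"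

inductive_set left_ideal :: "fa set \<Rightarrow> fa set" for R where
  zero: "fa_zero \<in> left_ideal R"
| gen: "x \<in> R \<Longrightarrow> a \<in> fa_carrier \<Longrightarrow> fa_mult a x \<in> left_ideal R"
| add: "x \<in> left_ideal R \<Longrightarrow> y \<in> left_ideal R \<Longrightarrow> fa_add x y \<in> left_ideal R"
| smult: "x \<in> left_ideal R \<Longrightarrow> fa_smult c x \<in> left_ideal R"

text \<open>Y(gl_2) = fa_carrier / yangian_ideal.\<close>
definition yangian_ideal :: "fa set" where
  "yangian_ideal = two_sided_ideal yangian_rels"

text \<open>Preimage in the free algebra of the left ideal of Y(gl_2) generated by
  t_12^(r), t_11^(r) - lam1^(r), t_22^(r) - lam2^(r), r \<ge> 1.  The Verma module
  is fa_carrier / verma_ideal (= Y(gl_2) modulo that left ideal).\<close>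
definition verma_ideal :: "(nat \<Rightarrow> complex) \<Rightarrow> (nat \<Rightarrow> complex) \<Rightarrow> fa set" where
  "verma_ideal lam1 lam2 = left_ideal (yangian_ideal \<union>
     {tg I1 I2 r | r. r \<ge> 1} \<union>
     {fa_sub (tg I1 I1 r) (fa_smult (lam1 r) fa_one) | r. r \<ge> 1} \<union>
     {fa_sub (tg I2 I2 r) (fa_smult (lam2 r) fa_one) | r. r \<ge> 1})"

definition qcoset :: "fa set \<Rightarrow> fa \<Rightarrow> fa set" where
  "qcoset L x = {fa_add x l | l. l \<in> L}"

definition qmodule :: "fa set \<Rightarrow> fa set set" where
  "qmodule L = qcoset L ` fa_carrier"

text \<open>N is a submodule (over the free algebra, equivalently over Y(gl_2), since
  the Yangian ideal acts trivially) of the quotient module fa_carrier / L\<close>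
definition is_submodule :: "fa set \<Rightarrow> fa set set \<Rightarrow> bool" where
  "is_submodule L N \<longleftrightarrow> N \<subseteq> qmodule L \<and> qcoset L fa_zero \<in> N \<and>
     (\<forall>x\<in>fa_carrier. \<forall>y\<in>fa_carrier. qcoset L x \<in> N \<longrightarrow> qcoset L y \<in> N \<longrightarrow>
         qcoset L (fa_add x y) \<in> N) \<and>
     (\<forall>c. \<forall>x\<in>fa_carrier. qcoset L x \<in> N \<longrightarrow> qcoset L (fa_smult c x) \<in> N) \<and>
     (\<forall>a\<in>fa_carrier. \<forall>x\<in>fa_carrier. qcoset L x \<in> N \<longrightarrow> qcoset L (fa_mult a x) \<in> N)"

definition qmodule_reducible :: "fa set \<Rightarrow> bool" where
  "qmodule_reducible L \<longleftrightarrow>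
     (\<exists>N. is_submodule L N \<and> N \<noteq> {qcoset L fa_zero} \<and> N \<noteq> qmodule L)"

text \<open>lam r (r \<ge> 1) are the coefficients lambda^(r); the series lambda(u) =
  1 + sum_r lambda^(r) u^-r is encoded as a formal power series in z = u^-1.\<close>
definition hw_series :: "(nat \<Rightarrow> complex) \<Rightarrow> complex fps" where
  "hw_series lam = Abs_fps (\<lambda>r. if r = 0 then 1 else lam r)"

text \<open>A formal series in z = u^-1 is the expansion at u = infinity (z = 0) of a
  rational function in u iff it is the expansion at z = 0 of a rational function
  in z, i.e. Q * f = P for polynomials P, Q with Q \<noteq> 0.\<close>
definition is_rational_expansion :: "complex fps \<Rightarrow> bool" where
  "is_rational_expansion f \<longleftrightarrow>
     (\<exists>P Q :: complex poly. Q \<noteq> 0 \<and> fps_of_poly Q * f = fps_of_poly P)"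

end

theory Submission
  imports
    Defs
    "HOL-Library.Function_Algebras"
    "HOL-Computational_Algebra.Fundamental_Theorem_Algebra"
begin

text \<open>
  Factor \<open>\<lambda>\<^sub>1(u) = f(u) \<Prod>\<^sub>k (1 + a\<^sub>k u\<^sup>-\<^sup>1)\<close> and
  \<open>\<lambda>\<^sub>2(u) = f(u) \<Prod>\<^sub>k (1 + b\<^sub>k u\<^sup>-\<^sup>1)\<close> with \<open>n\<close> factors each; padding the
  numerator or the denominator of \<open>\<lambda>\<^sub>1/\<lambda>\<^sub>2\<close> with zero parameters, all \<open>a\<^sub>k\<close> or all
  \<open>b\<^sub>k\<close> are nonzero. The tensor product of the evaluation modules \<open>L(a\<^sub>k, b\<^sub>k)\<close>,
  twisted by \<open>f(u)\<close>, contains a highest weight vector of weight \<open>(\<lambda>\<^sub>1, \<lambda>\<^sub>2)\<close>, hence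
  receives a module map from \<open>M(\<lambda>\<^sub>1(u), \<lambda>\<^sub>2(u))\<close>. Before twisting, \<open>T\<^sub>2\<^sub>1(u)\<close> is a
  polynomial of degree \<open>n\<close> in \<open>u\<^sup>-\<^sup>1\<close>, so the coefficient \<open>x\<close> of \<open>u\<^sup>-\<^sup>n\<^sup>-\<^sup>1\<close> in
  \<open>f(u)\<^sup>-\<^sup>1 t\<^sub>2\<^sub>1(u)\<close> lies in the kernel. One more factor \<open>L(0, 0)\<close>, placed on the
  left or on the right, leaves the weight unchanged but makes \<open>x\<close> act nontrivially on the
  highest weight vector, so \<open>x\<close> is nonzero in the Verma module: the kernel is a proper
  nonzero submodule.
\<close>

unbundle fps_syntax

lemma UNIV_idx: "(UNIV :: idx set) = {I1, I2}"
  using idx.exhaust by auto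

instance idx :: finite
  by standard (simp add: UNIV_idx)

section \<open>The RTT relation and the coproduct\<close>

definition yangian_hom :: "('i \<Rightarrow> 'i \<Rightarrow> nat \<Rightarrow> 'r::ring_1) \<Rightarrow> bool" where
  "yangian_hom T \<longleftrightarrow> (\<forall>i j. T i j 0 = (if i = j then 1 else 0)) \<and>
    (\<forall>i j k l r s. (T i j (Suc r) * T k l s - T k l s * T i j (Suc r)) -
        (T i j r * T k l (Suc s) - T k l (Suc s) * T i j r) =
      T k j r * T i l s - T k j s * T i l r)"

text \<open>The coproduct \<open>\<Delta>(t\<^sub>i\<^sub>j(u)) = \<Sum>\<^sub>p t\<^sub>i\<^sub>p(u) \<otimes> t\<^sub>p\<^sub>j(u)\<close>, realised by two commuting
  families in one ring.\<close>

definition fam_mult ::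
  "('i::finite \<Rightarrow> 'i \<Rightarrow> nat \<Rightarrow> 'r::ring_1) \<Rightarrow> ('i \<Rightarrow> 'i \<Rightarrow> nat \<Rightarrow> 'r) \<Rightarrow> 'i \<Rightarrow> 'i \<Rightarrow> nat \<Rightarrow> 'r"
where
  "fam_mult A B i j r = (\<Sum>a=0..r. \<Sum>p\<in>UNIV. A i p a * B p j (r - a))"

definition commuting_fams ::
  "('i \<Rightarrow> 'i \<Rightarrow> nat \<Rightarrow> 'r::ring_1) \<Rightarrow> ('i \<Rightarrow> 'i \<Rightarrow> nat \<Rightarrow> 'r) \<Rightarrow> bool"
where
  "commuting_fams A B \<longleftrightarrow> (\<forall>i j k l a b. A i j a * B k l b = B k l b * A i j a)"

definition rtt_rel :: "'a::ring \<Rightarrow> 'a \<Rightarrow> ('i \<Rightarrow> 'i \<Rightarrow> 'a) \<Rightarrow> ('i \<Rightarrow> 'i \<Rightarrow> 'a) \<Rightarrow> bool" where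
  "rtt_rel D E X Y \<longleftrightarrow>
     (\<forall>i j k l. D * (X i j * Y k l - Y k l * X i j) = E * (X k j * Y i l - Y k j * X i l))"

lemma sum_mult_sum_commuting:
  fixes a b c d :: "'i \<Rightarrow> 'a::ring"
  assumes "\<And>p q. b p * c q = c q * b p"
  shows "(\<Sum>p\<in>P. a p * b p) * (\<Sum>q\<in>Q. c q * d q) = (\<Sum>p\<in>P. \<Sum>q\<in>Q. (a p * c q) * (b p * d q))"
  unfolding sum_product by (intro sum.cong refl) (metis assms mult.assoc)

lemma central_mult_diff_split:
  fixes D :: "'a::ring"
  assumes "\<And>F. D * F = F * D"
  shows "D * (X * Y - X' * Y') = (D * (X - X')) * Y + X' * (D * (Y - Y'))"
  using assms[of X'] by (simp add: algebra_simps) (metis mult.assoc)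

lemma rtt_rel_mult:
  fixes D E :: "'a::ring" and AX AY BX BY :: "'i::finite \<Rightarrow> 'i \<Rightarrow> 'a"
  assumes D: "\<And>F. D * F = F * D" and E: "\<And>F. E * F = F * E"
    and A: "rtt_rel D E AX AY" and B: "rtt_rel D E BX BY"
    and BX_AY: "\<And>i j k l. BX i j * AY k l = AY k l * BX i j"
    and AX_BY: "\<And>i j k l. AX i j * BY k l = BY k l * AX i j"
  shows "rtt_rel D E (\<lambda>i j. \<Sum>p\<in>UNIV. AX i p * BX p j) (\<lambda>i j. \<Sum>p\<in>UNIV. AY i p * BY p j)"
    (is "rtt_rel D E ?X ?Y")
  unfolding rtt_rel_def
proof (intro allI)
  fix i j k l
  have XY: "?X i j * ?Y k l = (\<Sum>p\<in>UNIV. \<Sum>q\<in>UNIV. (AX i p * AY k q) * (BX p j * BY q l))" for i j k l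
    by (rule sum_mult_sum_commuting) (rule BX_AY)
  have YX: "?Y k l * ?X i j = (\<Sum>p\<in>UNIV. \<Sum>q\<in>UNIV. (AY k q * AX i p) * (BY q l * BX p j))" for i j k l
  proof -
    have "?Y k l * ?X i j = (\<Sum>q\<in>UNIV. \<Sum>p\<in>UNIV. (AY k q * AX i p) * (BY q l * BX p j))"
      by (rule sum_mult_sum_commuting) (simp add: AX_BY)
    also have "\<dots> = (\<Sum>p\<in>UNIV. \<Sum>q\<in>UNIV. (AY k q * AX i p) * (BY q l * BX p j))"
      by (rule sum.swap)
    finally show ?thesis .
  qed
  have E_mid: "W * (E * U) = E * (W * U)" for W U
    by (metis E mult.assoc)
  have "D * (?X i j * ?Y k l - ?Y k l * ?X i j) =
      (\<Sum>p\<in>UNIV. \<Sum>q\<in>UNIV. (D * (AX i p * AY k q - AY k q * AX i p)) * (BX p j * BY q l)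
         + (AY k q * AX i p) * (D * (BX p j * BY q l - BY q l * BX p j)))"
    unfolding XY YX
    by (simp only: sum_distrib_left flip: sum_subtractf)
      (intro sum.cong refl central_mult_diff_split D)
  also have "\<dots> = (\<Sum>p\<in>UNIV. \<Sum>q\<in>UNIV. E * ((AX k p * AY i q - AY k p * AX i q) * (BX p j * BY q l)
         + (AY k q * AX i p) * (BX q j * BY p l - BY q j * BX p l)))"
    using A B unfolding rtt_rel_def by (simp add: E_mid distrib_left mult.assoc)
  also have "\<dots> = E * ((\<Sum>p\<in>UNIV. \<Sum>q\<in>UNIV. (AX k p * AY i q) * (BX p j * BY q l))
      - (\<Sum>p\<in>UNIV. \<Sum>q\<in>UNIV. (AY k p * AX i q) * (BX p j * BY q l))
      + ((\<Sum>p\<in>UNIV. \<Sum>q\<in>UNIV. (AY k q * AX i p) * (BX q j * BY p l))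
      - (\<Sum>p\<in>UNIV. \<Sum>q\<in>UNIV. (AY k q * AX i p) * (BY q j * BX p l))))"
    by (simp only: left_diff_distrib right_diff_distrib sum.distrib sum_subtractf
        flip: sum_distrib_left)
  also have "(\<Sum>p\<in>UNIV. \<Sum>q\<in>UNIV. (AY k q * AX i p) * (BX q j * BY p l)) =
      (\<Sum>p\<in>UNIV. \<Sum>q\<in>UNIV. (AY k p * AX i q) * (BX p j * BY q l))"
    by (rule sum.swap)
  finally show "D * (?X i j * ?Y k l - ?Y k l * ?X i j) = E * (?X k j * ?Y i l - ?Y k j * ?X i l)"
    unfolding XY YX by simp
qed

text \<open>\<open>T(u)\<close> and \<open>T(v)\<close> as double power series in \<open>z = u\<^sup>-\<^sup>1\<close> (outer variable) and
  \<open>w = v\<^sup>-\<^sup>1\<close> (inner variable).\<close>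

definition series_z :: "('i \<Rightarrow> 'i \<Rightarrow> nat \<Rightarrow> 'r::ring_1) \<Rightarrow> 'i \<Rightarrow> 'i \<Rightarrow> 'r fps fps" where
  "series_z T i j = Abs_fps (\<lambda>a. fps_const (T i j a))"

definition series_w :: "('i \<Rightarrow> 'i \<Rightarrow> nat \<Rightarrow> 'r::ring_1) \<Rightarrow> 'i \<Rightarrow> 'i \<Rightarrow> 'r fps fps" where
  "series_w T i j = fps_const (Abs_fps (T i j))"

lemma series_z_series_w_nth: "(series_z A i j * series_w B k l) $ a $ b = A i j a * B k l b"
  by (simp add: series_z_def series_w_def fps_const_mult_right fps_const_mult_left)

lemma series_w_series_z_nth: "(series_w B k l * series_z A i j) $ a $ b = B k l b * A i j a"
  by (simp add: series_z_def series_w_def fps_const_mult_right fps_const_mult_left)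

lemma fps_const_X_mult_nth:
  "((fps_const fps_X :: 'r::ring_1 fps fps) * F) $ a $ b = (if b = 0 then 0 else F $ a $ (b - 1))"
  by (simp add: fps_const_mult_left)

lemma fps_const_X_commute: "fps_const fps_X * F = F * (fps_const fps_X :: 'r::ring_1 fps fps)"
  by (simp add: fps_const_mult_left fps_const_mult_right fps_mult_fps_X_commute)

lemma rtt_lhs_nth:
  "((fps_const fps_X - fps_X) *
      (series_z T i j * series_w T k l - series_w T k l * series_z T i j)) $ a $ b =
    (if b = 0 then 0 else T i j a * T k l (b - 1) - T k l (b - 1) * T i j a) -
    (if a = 0 then 0 else T i j (a - 1) * T k l b - T k l b * T i j (a - 1))"
  by (simp only: left_diff_distrib fps_const_X_mult_nth fps_sub_nth fps_X_mult_nth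
      series_z_series_w_nth series_w_series_z_nth)
    (simp add: series_z_series_w_nth series_w_series_z_nth)

lemma rtt_rhs_nth:
  "(fps_X * fps_const fps_X *
      (series_z T k j * series_w T i l - series_w T k j * series_z T i l)) $ a $ b =
    (if a = 0 \<or> b = 0 then 0 else T k j (a - 1) * T i l (b - 1) - T k j (b - 1) * T i l (a - 1))"
  by (simp only: mult.assoc fps_const_X_mult_nth fps_sub_nth fps_X_mult_nth
      series_z_series_w_nth series_w_series_z_nth)
    (auto simp: series_z_series_w_nth series_w_series_z_nth)

text \<open>The defining relations say
  \<open>(u - v) [T\<^sub>i\<^sub>j(u), T\<^sub>k\<^sub>l(v)] = T\<^sub>k\<^sub>j(u) T\<^sub>i\<^sub>l(v) - T\<^sub>k\<^sub>j(v) T\<^sub>i\<^sub>l(u)\<close>;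
  multiplied by \<open>z w\<close> this becomes the following relation without negative powers.\<close>

abbreviation (input) rtt_series :: "('i \<Rightarrow> 'i \<Rightarrow> nat \<Rightarrow> 'r::ring_1) \<Rightarrow> bool" where
  "rtt_series T \<equiv>
     rtt_rel (fps_const fps_X - fps_X) (fps_X * fps_const fps_X) (series_z T) (series_w T)"

lemma rtt_series_if_yangian_hom:
  assumes "yangian_hom T"
  shows "rtt_series T"
  unfolding rtt_rel_def
proof (intro allI fps_ext)
  fix i j k l a b
  show "((fps_const fps_X - fps_X) *
        (series_z T i j * series_w T k l - series_w T k l * series_z T i j)) $ a $ b =
      (fps_X * fps_const fps_X *
        (series_z T k j * series_w T i l - series_w T k j * series_z T i l)) $ a $ b"
    using assms unfolding rtt_lhs_nth rtt_rhs_nth yangian_hom_def by (cases a; cases b) auto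
qed

lemma yangian_hom_if_rtt_series:
  assumes "\<And>i j. T i j 0 = (if i = j then 1 else 0)" and "rtt_series T"
  shows "yangian_hom T"
  unfolding yangian_hom_def
proof (intro conjI allI)
  fix i j k l r s
  have "((fps_const fps_X - fps_X) *
        (series_z T i j * series_w T k l - series_w T k l * series_z T i j)) $ Suc r $ Suc s =
      (fps_X * fps_const fps_X *
        (series_z T k j * series_w T i l - series_w T k j * series_z T i l)) $ Suc r $ Suc s"
    using assms(2) unfolding rtt_rel_def by metis
  then show "(T i j (Suc r) * T k l s - T k l s * T i j (Suc r)) -
      (T i j r * T k l (Suc s) - T k l (Suc s) * T i j r) = T k j r * T i l s - T k j s * T i l r"
    unfolding rtt_lhs_nth rtt_rhs_nth by simp
qed (use assms(1) in blast)

lemma fps_const_sum: "fps_const (sum f S) = (\<Sum>x\<in>S. fps_const (f x))"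
  by (rule fps_ext) (simp add: fps_sum_nth)

lemma series_z_fam_mult: "series_z (fam_mult A B) i j = (\<Sum>p\<in>UNIV. series_z A i p * series_z B p j)"
  by (rule fps_ext)
    (simp add: series_z_def fam_mult_def fps_sum_nth fps_mult_nth sum.swap[of _ UNIV]
      flip: fps_const_sum)

lemma series_w_fam_mult: "series_w (fam_mult A B) i j = (\<Sum>p\<in>UNIV. series_w A i p * series_w B p j)"
proof -
  have "Abs_fps (fam_mult A B i j) = (\<Sum>p\<in>UNIV. Abs_fps (A i p) * Abs_fps (B p j))"
    by (rule fps_ext) (simp add: fam_mult_def fps_sum_nth fps_mult_nth sum.swap[of _ UNIV])
  then show ?thesis
    by (simp add: series_w_def flip: fps_const_sum)
qed

lemma commuting_fams_sym: "commuting_fams A B \<Longrightarrow> commuting_fams B A"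
  by (simp add: commuting_fams_def)

lemma series_z_series_w_commute:
  "commuting_fams A B \<Longrightarrow> series_z A i j * series_w B k l = series_w B k l * series_z A i j"
  by (simp add: fps_eq_iff series_z_series_w_nth series_w_series_z_nth commuting_fams_def)

lemma fam_mult_0:
  assumes "\<And>i j. A i j 0 = (if i = j then 1 else 0)" "\<And>i j. B i j 0 = (if i = j then 1 else 0)"
  shows "fam_mult A B i j 0 = (if i = j then 1 else 0)"
  by (simp add: fam_mult_def assms mult_delta_left mult_delta_right if_distrib[of "\<lambda>x. x * _"])

lemma yangian_hom_fam_mult:
  fixes A B :: "'i::finite \<Rightarrow> 'i \<Rightarrow> nat \<Rightarrow> 'r::ring_1"
  assumes "yangian_hom A" "yangian_hom B" "commuting_fams A B"
  shows "yangian_hom (fam_mult A B)"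
proof (rule yangian_hom_if_rtt_series)
  show "fam_mult A B i j 0 = (if i = j then 1 else 0)" for i j
    using assms(1,2) by (intro fam_mult_0) (simp_all add: yangian_hom_def)
  have "rtt_series A" "rtt_series B"
    using assms(1,2) by (simp_all add: rtt_series_if_yangian_hom)
  moreover have "(fps_const fps_X - fps_X) * F = F * (fps_const fps_X - fps_X)"
    for F :: "'r fps fps"
    by (simp add: left_diff_distrib right_diff_distrib fps_const_X_commute fps_mult_fps_X_commute)
  moreover have "fps_X * fps_const fps_X * F = F * (fps_X * fps_const fps_X)" for F :: "'r fps fps"
    by (metis mult.assoc fps_const_X_commute fps_mult_fps_X_commute)
  ultimately show "rtt_series (fam_mult A B)"
    unfolding series_z_fam_mult series_w_fam_mult using assms(3)
    by (intro rtt_rel_mult) (simp_all add: series_z_series_w_commute commuting_fams_sym)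
qed

section \<open>Operators on a tensor product of \<open>gl\<^sub>2\<close> Verma modules\<close>

text \<open>A vector is a coefficient family over the basis vectors \<open>e\<^sub>\<kappa>\<close> of the tensor product of
  \<open>gl\<^sub>2\<close> Verma modules at the sites \<open>m = 0, 1, 2, \<dots>\<close>, where \<open>\<kappa> m\<close> counts the lowering
  operators applied at site \<open>m\<close>.\<close>

type_synonym vec = "(nat \<Rightarrow> nat) \<Rightarrow> complex"

definition lin_map :: "(vec \<Rightarrow> vec) \<Rightarrow> bool" where
  "lin_map f \<longleftrightarrow> (\<forall>x y. f (x + y) = f x + f y) \<and> (\<forall>c x. f (\<lambda>\<kappa>. c * x \<kappa>) = (\<lambda>\<kappa>. c * f x \<kappa>))"

typedef endo = "Collect lin_map"
  morphisms endo_apply Abs_endo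
  by (rule exI[of _ id]) (simp add: lin_map_def)

setup_lifting type_definition_endo

lemma endo_apply_add: "endo_apply X (x + y) = endo_apply X x + endo_apply X y"
  using endo_apply[of X] by (simp add: lin_map_def)

lemma endo_apply_scale: "endo_apply X (\<lambda>\<kappa>. c * x \<kappa>) = (\<lambda>\<kappa>. c * endo_apply X x \<kappa>)"
  using endo_apply[of X] by (simp add: lin_map_def)

lemma endo_apply_zero [simp]: "endo_apply X 0 = 0"
  using endo_apply_add[of X 0 0] by simp

lemma endo_eq_iff: "X = Y \<longleftrightarrow> (\<forall>x. endo_apply X x = endo_apply Y x)"
  by (metis endo_apply_inject ext)

instantiation endo :: ring_1
begin

lift_definition zero_endo :: endo is "\<lambda>x. 0"
  by (simp add: lin_map_def fun_eq_iff)
lift_definition one_endo :: endo is "\<lambda>x. x"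
  by (simp add: lin_map_def)
lift_definition plus_endo :: "endo \<Rightarrow> endo \<Rightarrow> endo" is "\<lambda>f g x. f x + g x"
  by (simp add: lin_map_def fun_eq_iff algebra_simps)
lift_definition minus_endo :: "endo \<Rightarrow> endo \<Rightarrow> endo" is "\<lambda>f g x. f x - g x"
  by (simp add: lin_map_def fun_eq_iff algebra_simps)
lift_definition uminus_endo :: "endo \<Rightarrow> endo" is "\<lambda>f x. - f x"
  by (simp add: lin_map_def fun_eq_iff algebra_simps)
lift_definition times_endo :: "endo \<Rightarrow> endo \<Rightarrow> endo" is "\<lambda>f g x. f (g x)"
  by (simp add: lin_map_def)

instance
proof
  fix a b c :: endo
  show "a + b + c = a + (b + c)" by transfer (simp add: add.assoc)
  show "a + b = b + a" by transfer (simp add: add.commute)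
  show "0 + a = a" by transfer simp
  show "- a + a = 0" by transfer simp
  show "a - b = a + - b" by transfer simp
  show "a * b * c = a * (b * c)" by transfer simp
  show "1 * a = a" by transfer simp
  show "a * 1 = a" by transfer simp
  show "(a + b) * c = a * c + b * c" by transfer simp
  show "a * (b + c) = a * b + a * c" by transfer (simp add: lin_map_def)
  show "(0::endo) \<noteq> 1"
  proof
    assume "(0::endo) = 1"
    then have "endo_apply 0 (\<lambda>_. 1) = endo_apply 1 (\<lambda>_. 1)" by simp
    then show False by transfer (simp add: fun_eq_iff)
  qed
qed

end

lemma endo_apply_plus [simp]: "endo_apply (X + Y) x = endo_apply X x + endo_apply Y x"
  by transfer simp
lemma endo_apply_minus [simp]: "endo_apply (X - Y) x = endo_apply X x - endo_apply Y x"
  by transfer simp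
lemma endo_apply_uminus [simp]: "endo_apply (- X) x = - endo_apply X x"
  by transfer simp
lemma endo_apply_times [simp]: "endo_apply (X * Y) x = endo_apply X (endo_apply Y x)"
  by transfer simp
lemma endo_apply_0 [simp]: "endo_apply 0 x = 0"
  by transfer simp
lemma endo_apply_1 [simp]: "endo_apply 1 x = x"
  by transfer simp
lemma endo_apply_sum [simp]: "endo_apply (sum F S) x = (\<Sum>s\<in>S. endo_apply (F s) x)"
  by (induction S rule: infinite_finite_induct) auto

lift_definition of_complex :: "complex \<Rightarrow> endo" is "\<lambda>c x \<kappa>. c * x \<kappa>"
  by (simp add: lin_map_def fun_eq_iff algebra_simps)

lemma endo_apply_of_complex [simp]: "endo_apply (of_complex c) x = (\<lambda>\<kappa>. c * x \<kappa>)"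
  by transfer simp

lemma of_complex_commute: "of_complex c * X = X * of_complex c"
  by (simp add: endo_eq_iff endo_apply_scale)
lemma of_complex_mult: "of_complex (c * d) = of_complex c * of_complex d"
  by (simp add: endo_eq_iff fun_eq_iff)
lemma of_complex_add: "of_complex (c + d) = of_complex c + of_complex d"
  by (simp add: endo_eq_iff fun_eq_iff algebra_simps)
lemma of_complex_diff: "of_complex (c - d) = of_complex c - of_complex d"
  by (simp add: endo_eq_iff fun_eq_iff algebra_simps)
lemma of_complex_1 [simp]: "of_complex 1 = 1"
  by (simp add: endo_eq_iff fun_eq_iff)
lemma of_complex_0 [simp]: "of_complex 0 = 0"
  by (simp add: endo_eq_iff fun_eq_iff)
lemma of_complex_sum: "of_complex (sum f S) = (\<Sum>s\<in>S. of_complex (f s))"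
  by (induction S rule: infinite_finite_induct) (auto simp: of_complex_add)

lift_definition site_op :: "nat \<Rightarrow> (nat \<Rightarrow> complex) \<Rightarrow> (nat \<Rightarrow> nat) \<Rightarrow> endo" is
  "\<lambda>m w g x \<kappa>. w (\<kappa> m) * x (\<kappa>(m := g (\<kappa> m)))"
  by (simp add: lin_map_def fun_eq_iff algebra_simps)

lemma endo_apply_site_op: "endo_apply (site_op m w g) x \<kappa> = w (\<kappa> m) * x (\<kappa>(m := g (\<kappa> m)))"
  by transfer simp

lemma site_op_commute:
  "m \<noteq> m' \<Longrightarrow> site_op m w g * site_op m' w' g' = site_op m' w' g' * site_op m w g"
  by (simp add: endo_eq_iff fun_eq_iff endo_apply_site_op fun_upd_twist)

text \<open>\<open>E\<^sub>i\<^sub>j\<close> acting at site \<open>m\<close> on the Verma module of highest weight \<open>(a, b)\<close>; on coefficient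
  families, \<open>E\<^sub>2\<^sub>1\<close> shifts \<open>\<kappa> m\<close> down and \<open>E\<^sub>1\<^sub>2\<close> shifts it up.\<close>

definition gl2_op :: "nat \<Rightarrow> complex \<Rightarrow> complex \<Rightarrow> idx \<Rightarrow> idx \<Rightarrow> endo" where
  "gl2_op m a b i j = (case (i, j) of
      (I1, I1) \<Rightarrow> site_op m (\<lambda>n. a - of_nat n) id
    | (I2, I2) \<Rightarrow> site_op m (\<lambda>n. b + of_nat n) id
    | (I2, I1) \<Rightarrow> site_op m (\<lambda>n. if n = 0 then 0 else 1) (\<lambda>n. n - 1)
    | (I1, I2) \<Rightarrow> site_op m (\<lambda>n. (of_nat n + 1) * (a - b - of_nat n)) Suc)"

lemma gl2_op_commutator:
  "gl2_op m a b i j * gl2_op m a b k l - gl2_op m a b k l * gl2_op m a b i j =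
     (if k = j then gl2_op m a b i l else 0) - (if i = l then gl2_op m a b k j else 0)"
  by (cases i; cases j; cases k; cases l)
    (auto simp: gl2_op_def endo_eq_iff fun_eq_iff endo_apply_site_op algebra_simps of_nat_diff)

definition eval_fam :: "nat \<Rightarrow> complex \<Rightarrow> complex \<Rightarrow> idx \<Rightarrow> idx \<Rightarrow> nat \<Rightarrow> endo" where
  "eval_fam m a b i j r =
     (if r = 0 then (if i = j then 1 else 0) else if r = 1 then gl2_op m a b i j else 0)"

definition scalar_fam :: "complex fps \<Rightarrow> 'i \<Rightarrow> 'i \<Rightarrow> nat \<Rightarrow> endo" where
  "scalar_fam F i j r = (if i = j then of_complex (F $ r) else 0)"

lemma yangian_hom_eval_fam: "yangian_hom (eval_fam m a b)"
  unfolding yangian_hom_def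
proof (intro conjI allI)
  fix i j k l and r s :: nat
  let ?T = "eval_fam m a b"
  have "r = 0 \<or> r = 1 \<or> r \<ge> 2" "s = 0 \<or> s = 1 \<or> s \<ge> 2"
    by auto
  then show "(?T i j (Suc r) * ?T k l s - ?T k l s * ?T i j (Suc r)) -
      (?T i j r * ?T k l (Suc s) - ?T k l (Suc s) * ?T i j r) =
      ?T k j r * ?T i l s - ?T k j s * ?T i l r"
    by (elim disjE) (simp_all add: eval_fam_def gl2_op_commutator)
qed (simp add: eval_fam_def)

lemma yangian_hom_scalar_fam:
  assumes "F $ 0 = 1"
  shows "yangian_hom (scalar_fam F)"
  unfolding yangian_hom_def
  by (auto simp: scalar_fam_def assms mult.commute simp flip: of_complex_mult)

definition commutes_site :: "nat \<Rightarrow> endo \<Rightarrow> bool" where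
  "commutes_site m X \<longleftrightarrow> (\<forall>w g. X * site_op m w g = site_op m w g * X)"

lemma commutes_site_0 [simp]: "commutes_site m 0"
  and commutes_site_1 [simp]: "commutes_site m 1"
  and commutes_site_of_complex [simp]: "commutes_site m (of_complex c)"
  by (auto simp: commutes_site_def of_complex_commute)

lemma commutes_site_add: "commutes_site m X \<Longrightarrow> commutes_site m Y \<Longrightarrow> commutes_site m (X + Y)"
  by (simp add: commutes_site_def algebra_simps)

lemma commutes_site_mult: "commutes_site m X \<Longrightarrow> commutes_site m Y \<Longrightarrow> commutes_site m (X * Y)"
  by (simp add: commutes_site_def) (metis mult.assoc)

lemma commutes_site_sum:
  "(\<And>s. s \<in> S \<Longrightarrow> commutes_site m (F s)) \<Longrightarrow> commutes_site m (sum F S)"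
  by (induction S rule: infinite_finite_induct) (auto intro: commutes_site_add)

lemma commutes_site_gl2_op: "m \<noteq> m' \<Longrightarrow> commutes_site m (gl2_op m' a b i j)"
  by (cases i; cases j) (simp_all add: gl2_op_def commutes_site_def site_op_commute)

lemma commutes_siteD:
  "commutes_site m X \<Longrightarrow> X * gl2_op m a b i j = gl2_op m a b i j * X"
  by (cases i; cases j) (simp_all add: gl2_op_def commutes_site_def)

lemma commutes_site_fam_mult:
  assumes "\<And>i j r. commutes_site m (A i j r)" "\<And>i j r. commutes_site m (B i j r)"
  shows "commutes_site m (fam_mult A B i j r)"
  unfolding fam_mult_def using assms by (intro commutes_site_sum commutes_site_mult)

lemma commuting_fams_eval_fam:
  assumes "\<And>i j r. commutes_site m (A i j r)"
  shows "commuting_fams A (eval_fam m a b)"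
  using assms by (simp add: commuting_fams_def eval_fam_def commutes_siteD)

lemma commuting_fams_scalar_fam: "commuting_fams (scalar_fam F) B"
  by (simp add: commuting_fams_def scalar_fam_def of_complex_commute)

text \<open>The factors occupy the sites \<open>1, \<dots>, length l\<close>, leaving site \<open>0\<close> free for an extra
  factor on the left.\<close>

fun eval_tensor :: "(complex \<times> complex) list \<Rightarrow> idx \<Rightarrow> idx \<Rightarrow> nat \<Rightarrow> endo" where
  "eval_tensor [] = scalar_fam 1"
| "eval_tensor ((a, b) # l) = fam_mult (eval_tensor l) (eval_fam (Suc (length l)) a b)"

lemma commutes_site_eval_tensor:
  "m = 0 \<or> length l < m \<Longrightarrow> commutes_site m (eval_tensor l i j r)"
proof (induction l arbitrary: i j r rule: eval_tensor.induct)
  case 1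
  then show ?case by (simp add: scalar_fam_def)
next
  case (2 a b l)
  then show ?case
    by (auto simp: eval_fam_def intro!: commutes_site_fam_mult commutes_site_gl2_op)
qed

lemma yangian_hom_eval_tensor: "yangian_hom (eval_tensor l)"
proof (induction l rule: eval_tensor.induct)
  case 1
  then show ?case by (simp add: yangian_hom_scalar_fam)
next
  case (2 a b l)
  then show ?case
    by (auto intro!: yangian_hom_fam_mult yangian_hom_eval_fam commuting_fams_eval_fam
        commutes_site_eval_tensor)
qed

definition vac :: vec where
  "vac = (\<lambda>\<kappa>. if \<kappa> = (\<lambda>_. 0) then 1 else 0)"

definition highest_weight :: "(idx \<Rightarrow> idx \<Rightarrow> nat \<Rightarrow> endo) \<Rightarrow> complex fps \<Rightarrow> complex fps \<Rightarrow> bool" where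
  "highest_weight T P1 P2 \<longleftrightarrow> (\<forall>r. endo_apply (T I1 I2 r) vac = 0 \<and>
      endo_apply (T I1 I1 r) vac = (\<lambda>\<kappa>. P1 $ r * vac \<kappa>) \<and>
      endo_apply (T I2 I2 r) vac = (\<lambda>\<kappa>. P2 $ r * vac \<kappa>))"

lemma sum_scaled_vec: "(\<Sum>a\<in>S. (\<lambda>\<kappa>. c a * x \<kappa>)) = (\<lambda>\<kappa>. (\<Sum>a\<in>S. c a) * (x :: vec) \<kappa>)"
  by (induction S rule: infinite_finite_induct) (auto simp: fun_eq_iff algebra_simps)

lemma highest_weight_fam_mult:
  assumes A: "highest_weight A P1 P2" and B: "highest_weight B Q1 Q2" and AB: "commuting_fams A B"
  shows "highest_weight (fam_mult A B) (P1 * Q1) (P2 * Q2)"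
  unfolding highest_weight_def
proof (intro allI conjI)
  fix r
  have comm:
    "endo_apply (A i j a) (endo_apply (B k l b) x) = endo_apply (B k l b) (endo_apply (A i j a) x)"
    for i j k l a b x
    using AB unfolding commuting_fams_def by (metis endo_apply_times)
  have A': "endo_apply (A I1 I2 a) vac = 0" "endo_apply (A I1 I1 a) vac = (\<lambda>\<kappa>. P1 $ a * vac \<kappa>)"
      "endo_apply (A I2 I2 a) vac = (\<lambda>\<kappa>. P2 $ a * vac \<kappa>)" for a
    using A by (simp_all add: highest_weight_def)
  have B': "endo_apply (B I1 I2 a) vac = 0" "endo_apply (B I1 I1 a) vac = (\<lambda>\<kappa>. Q1 $ a * vac \<kappa>)"
      "endo_apply (B I2 I2 a) vac = (\<lambda>\<kappa>. Q2 $ a * vac \<kappa>)" for a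
    using B by (simp_all add: highest_weight_def)
  show "endo_apply (fam_mult A B I1 I2 r) vac = 0"
    by (simp add: fam_mult_def UNIV_idx A' B' endo_apply_scale flip: zero_fun_def)
  show "endo_apply (fam_mult A B I1 I1 r) vac = (\<lambda>\<kappa>. (P1 * Q1) $ r * vac \<kappa>)"
    by (simp add: fam_mult_def UNIV_idx A' B' comm endo_apply_scale fps_mult_nth
        flip: sum_scaled_vec zero_fun_def) (simp add: mult_ac)
  show "endo_apply (fam_mult A B I2 I2 r) vac = (\<lambda>\<kappa>. (P2 * Q2) $ r * vac \<kappa>)"
    by (simp add: fam_mult_def UNIV_idx A' B' endo_apply_scale fps_mult_nth
        flip: sum_scaled_vec zero_fun_def) (simp add: mult_ac)
qed

lemma highest_weight_eval_fam:
  "highest_weight (eval_fam m a b) (1 + fps_const a * fps_X) (1 + fps_const b * fps_X)"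
  unfolding highest_weight_def
  by (intro allI conjI) (auto simp: eval_fam_def gl2_op_def fun_eq_iff endo_apply_site_op vac_def)

lemma highest_weight_scalar_fam: "highest_weight (scalar_fam F) F F"
  by (simp add: highest_weight_def scalar_fam_def)

definition lin_factors :: "complex list \<Rightarrow> complex fps" where
  "lin_factors cs = (\<Prod>c\<leftarrow>cs. 1 + fps_const c * fps_X)"

lemma lin_factors_Nil [simp]: "lin_factors [] = 1"
  and lin_factors_Cons [simp]: "lin_factors (c # cs) = (1 + fps_const c * fps_X) * lin_factors cs"
  by (simp_all add: lin_factors_def)

lemma highest_weight_eval_tensor:
  "highest_weight (eval_tensor l) (lin_factors (map fst l)) (lin_factors (map snd l))"
proof (induction l rule: eval_tensor.induct)
  case 1
  show ?case by (simp add: highest_weight_scalar_fam flip: fps_one_def)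
next
  case (2 a b l)
  have "highest_weight (eval_tensor ((a, b) # l))
      (lin_factors (map fst l) * (1 + fps_const a * fps_X))
      (lin_factors (map snd l) * (1 + fps_const b * fps_X))"
    using 2 by (auto intro!: highest_weight_fam_mult highest_weight_eval_fam commuting_fams_eval_fam
        commutes_site_eval_tensor)
  then show ?case
    by (simp add: mult.commute)
qed

definition fam_deg_le :: "('i \<Rightarrow> 'i \<Rightarrow> nat \<Rightarrow> 'r::zero) \<Rightarrow> nat \<Rightarrow> bool" where
  "fam_deg_le T n \<longleftrightarrow> (\<forall>i j r. n < r \<longrightarrow> T i j r = 0)"

lemma fam_deg_le_fam_mult:
  assumes "fam_deg_le A n" "fam_deg_le B m"
  shows "fam_deg_le (fam_mult A B) (n + m)"
  unfolding fam_deg_le_def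
proof (intro allI impI)
  fix i j r
  assume r: "n + m < r"
  have "A i p a * B p j (r - a) = 0" for p a
  proof (cases "n < a")
    case True
    with assms(1) show ?thesis by (simp add: fam_deg_le_def)
  next
    case False
    with r assms(2) show ?thesis by (simp add: fam_deg_le_def)
  qed
  then show "fam_mult A B i j r = 0"
    by (simp add: fam_mult_def)
qed

lemma fam_deg_le_eval_tensor: "fam_deg_le (eval_tensor l) (length l)"
proof (induction l rule: eval_tensor.induct)
  case 1
  show ?case by (simp add: fam_deg_le_def scalar_fam_def)
next
  case (2 a b l)
  have "fam_deg_le (eval_fam (Suc (length l)) a b) 1"
    by (simp add: fam_deg_le_def eval_fam_def)
  with 2 show ?case
    using fam_deg_le_fam_mult by fastforce
qed

lemma lin_factors_nth_0: "lin_factors cs $ 0 = 1"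
  by (induction cs) simp_all

lemma lin_factors_nth_above: "length cs < k \<Longrightarrow> lin_factors cs $ k = 0"
proof (induction cs arbitrary: k)
  case (Cons c cs)
  then show ?case
    by (cases k) (simp_all add: distrib_right mult.assoc fps_X_mult_nth)
qed simp

lemma lin_factors_nth_length: "lin_factors cs $ length cs = prod_list cs"
  by (induction cs) (simp_all add: distrib_right mult.assoc fps_X_mult_nth lin_factors_nth_above)

lemma fam_mult_eval_fam_top:
  assumes "fam_deg_le S n"
  shows "fam_mult S (eval_fam m a b) i j (Suc n) = (\<Sum>p\<in>UNIV. S i p n * gl2_op m a b p j)"
proof -
  have "fam_mult S (eval_fam m a b) i j (Suc n) =
      (\<Sum>a'\<in>{n}. \<Sum>p\<in>UNIV. S i p a' * eval_fam m a b p j (Suc n - a'))"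
    unfolding fam_mult_def using assms
    by (intro sum.mono_neutral_right) (auto simp: fam_deg_le_def eval_fam_def intro!: sum.neutral)
  then show ?thesis
    by (simp add: eval_fam_def)
qed

lemma eval_fam_fam_mult_top:
  assumes "fam_deg_le S n"
  shows "fam_mult (eval_fam m a b) S i j (Suc n) = (\<Sum>p\<in>UNIV. gl2_op m a b i p * S p j n)"
proof -
  have "fam_mult (eval_fam m a b) S i j (Suc n) =
      (\<Sum>a'\<in>{1}. \<Sum>p\<in>UNIV. eval_fam m a b i p a' * S p j (Suc n - a'))"
    unfolding fam_mult_def using assms
    by (intro sum.mono_neutral_right) (auto simp: fam_deg_le_def eval_fam_def intro!: sum.neutral)
  then show ?thesis
    by (simp add: eval_fam_def)
qed

definition lowered_at :: "nat \<Rightarrow> nat \<Rightarrow> nat" where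
  "lowered_at m = (\<lambda>_. 0)(m := 1)"

lemma gl2_op_21_vac: "endo_apply (gl2_op m a b I2 I1) vac (lowered_at m) = 1"
  by (simp add: gl2_op_def endo_apply_site_op vac_def lowered_at_def fun_upd_idem_iff)

lemma fam_mult_eval_fam_top_21_vac:
  assumes "fam_deg_le S n" "highest_weight S P1 P2" "\<And>i j r. commutes_site m (S i j r)"
  shows "endo_apply (fam_mult S (eval_fam m 0 b) I2 I1 (Suc n)) vac (lowered_at m) = P2 $ n"
proof -
  have "endo_apply (gl2_op m 0 b I1 I1) vac = 0"
    by (auto simp: gl2_op_def fun_eq_iff endo_apply_site_op vac_def)
  moreover have "endo_apply (S I2 I2 n) (endo_apply (gl2_op m 0 b I2 I1) vac) =
      endo_apply (gl2_op m 0 b I2 I1) (endo_apply (S I2 I2 n) vac)"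
    using commutes_siteD[OF assms(3)] by (metis endo_apply_times)
  ultimately show ?thesis
    using assms(2) unfolding fam_mult_eval_fam_top[OF assms(1)]
    by (simp add: UNIV_idx highest_weight_def endo_apply_scale gl2_op_21_vac)
qed

lemma eval_fam_fam_mult_top_21_vac:
  assumes "fam_deg_le S n" "highest_weight S P1 P2" "\<And>i j r. commutes_site m (S i j r)"
  shows "endo_apply (fam_mult (eval_fam m a 0) S I2 I1 (Suc n)) vac (lowered_at m) = P1 $ n"
proof -
  have "endo_apply (gl2_op m a 0 I2 I2) (endo_apply (S I2 I1 n) vac) =
      endo_apply (S I2 I1 n) (endo_apply (gl2_op m a 0 I2 I2) vac)"
    using commutes_siteD[OF assms(3)] by (metis endo_apply_times)
  moreover have "endo_apply (gl2_op m a 0 I2 I2) vac = 0"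
    by (auto simp: gl2_op_def fun_eq_iff endo_apply_site_op vac_def)
  ultimately show ?thesis
    using assms(2) unfolding eval_fam_fam_mult_top[OF assms(1)]
    by (simp add: UNIV_idx highest_weight_def endo_apply_scale gl2_op_21_vac)
qed

lemma eval_tensor_left_extension:
  fixes l :: "(complex \<times> complex) list"
  defines "S \<equiv> fam_mult (eval_fam 0 0 0) (eval_tensor l)"
  shows "yangian_hom S" "highest_weight S (lin_factors (map fst l)) (lin_factors (map snd l))"
    and "endo_apply (S I2 I1 (Suc (length l))) vac (lowered_at 0) = prod_list (map fst l)"
proof -
  have comm: "commuting_fams (eval_fam 0 0 0) (eval_tensor l)"
    by (rule commuting_fams_sym, rule commuting_fams_eval_fam, rule commutes_site_eval_tensor) simp
  then show "yangian_hom S"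
    unfolding S_def by (intro yangian_hom_fam_mult yangian_hom_eval_fam yangian_hom_eval_tensor)
  show "highest_weight S (lin_factors (map fst l)) (lin_factors (map snd l))"
    using highest_weight_fam_mult[OF highest_weight_eval_fam highest_weight_eval_tensor comm]
    by (simp add: S_def)
  show "endo_apply (S I2 I1 (Suc (length l))) vac (lowered_at 0) = prod_list (map fst l)"
    unfolding S_def
    by (subst eval_fam_fam_mult_top_21_vac[OF fam_deg_le_eval_tensor highest_weight_eval_tensor])
      (simp_all add: commutes_site_eval_tensor lin_factors_nth_length[of "map fst l", simplified])
qed

lemma eval_tensor_right_extension:
  "endo_apply (eval_tensor ((0, 0) # l) I2 I1 (Suc (length l))) vac (lowered_at (Suc (length l))) =
    prod_list (map snd l)"
  unfolding eval_tensor.simps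
  by (subst fam_mult_eval_fam_top_21_vac[OF fam_deg_le_eval_tensor highest_weight_eval_tensor])
    (simp_all add: commutes_site_eval_tensor lin_factors_nth_length[of "map snd l", simplified])

lemma exists_rep_top_21_nonzero:
  assumes "prod_list (map fst l) \<noteq> 0 \<or> prod_list (map snd l) \<noteq> 0"
  obtains S where "yangian_hom S"
    "highest_weight S (lin_factors (map fst l)) (lin_factors (map snd l))"
    "endo_apply (S I2 I1 (Suc (length l))) vac \<noteq> 0"
  using assms
proof (elim disjE)
  assume "prod_list (map fst l) \<noteq> 0"
  then show thesis
    using eval_tensor_left_extension[of l] by (intro that) auto
next
  assume "prod_list (map snd l) \<noteq> 0"
  then show thesis
    using eval_tensor_right_extension[of l] highest_weight_eval_tensor[of "(0, 0) # l"]
      yangian_hom_eval_tensor[of "(0, 0) # l"]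
    by (intro that) auto
qed

section \<open>Evaluating the free algebra\<close>

definition fa_supp :: "fa \<Rightarrow> gen list set" where
  "fa_supp f = {w. f w \<noteq> 0}"

definition gen_eval :: "(idx \<Rightarrow> idx \<Rightarrow> nat \<Rightarrow> endo) \<Rightarrow> gen \<Rightarrow> endo" where
  "gen_eval T g = (case g of Gen i j r \<Rightarrow> T i j r)"

definition word_eval :: "(idx \<Rightarrow> idx \<Rightarrow> nat \<Rightarrow> endo) \<Rightarrow> gen list \<Rightarrow> endo" where
  "word_eval T w = prod_list (map (gen_eval T) w)"

definition fa_eval :: "(idx \<Rightarrow> idx \<Rightarrow> nat \<Rightarrow> endo) \<Rightarrow> fa \<Rightarrow> endo" where
  "fa_eval T f = (\<Sum>w\<in>fa_supp f. of_complex (f w) * word_eval T w)"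

lemma fa_carrier_iff: "f \<in> fa_carrier \<longleftrightarrow> finite (fa_supp f)"
  by (simp add: fa_carrier_def fa_supp_def)

lemma fa_eval_superset:
  assumes "finite S" "fa_supp f \<subseteq> S"
  shows "fa_eval T f = (\<Sum>w\<in>S. of_complex (f w) * word_eval T w)"
  unfolding fa_eval_def
  by (rule sum.mono_neutral_left) (use assms in \<open>auto simp: fa_supp_def\<close>)

lemma fa_supp_add: "fa_supp (fa_add f g) \<subseteq> fa_supp f \<union> fa_supp g"
  by (auto simp: fa_supp_def fa_add_def)

lemma fa_supp_sub: "fa_supp (fa_sub f g) \<subseteq> fa_supp f \<union> fa_supp g"
  by (auto simp: fa_supp_def fa_sub_def)

lemma fa_supp_smult: "fa_supp (fa_smult c f) \<subseteq> fa_supp f"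
  by (auto simp: fa_supp_def fa_smult_def)

lemma fa_supp_mult: "fa_supp (fa_mult f g) \<subseteq> (\<lambda>(u, v). u @ v) ` (fa_supp f \<times> fa_supp g)"
proof
  fix w
  assume "w \<in> fa_supp (fa_mult f g)"
  then obtain k where "f (take k w) * g (drop k w) \<noteq> 0"
    by (auto simp: fa_supp_def fa_mult_def intro: sum.not_neutral_contains_not_neutral)
  then show "w \<in> (\<lambda>(u, v). u @ v) ` (fa_supp f \<times> fa_supp g)"
    by (intro image_eqI[of _ _ "(take k w, drop k w)"]) (auto simp: fa_supp_def)
qed

lemma fa_supp_tg: "fa_supp (tg i j r) = {[Gen i j r]}"
  by (auto simp: fa_supp_def tg_def)

lemma fa_supp_one: "fa_supp fa_one = {[]}"
  by (auto simp: fa_supp_def fa_one_def)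

lemma fa_supp_zero: "fa_supp fa_zero = {}"
  by (auto simp: fa_supp_def fa_zero_def)

lemma fa_carrier_add: "f \<in> fa_carrier \<Longrightarrow> g \<in> fa_carrier \<Longrightarrow> fa_add f g \<in> fa_carrier"
  using fa_supp_add by (metis fa_carrier_iff finite_UnI finite_subset)

lemma fa_carrier_sub: "f \<in> fa_carrier \<Longrightarrow> g \<in> fa_carrier \<Longrightarrow> fa_sub f g \<in> fa_carrier"
  using fa_supp_sub by (metis fa_carrier_iff finite_UnI finite_subset)

lemma fa_carrier_smult: "f \<in> fa_carrier \<Longrightarrow> fa_smult c f \<in> fa_carrier"
  using fa_supp_smult by (metis fa_carrier_iff finite_subset)

lemma fa_carrier_mult: "f \<in> fa_carrier \<Longrightarrow> g \<in> fa_carrier \<Longrightarrow> fa_mult f g \<in> fa_carrier"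
  using fa_supp_mult by (metis fa_carrier_iff finite_SigmaI finite_imageI finite_subset)

lemma fa_carrier_comm: "f \<in> fa_carrier \<Longrightarrow> g \<in> fa_carrier \<Longrightarrow> fa_comm f g \<in> fa_carrier"
  by (simp add: fa_comm_def fa_carrier_sub fa_carrier_mult)

lemma fa_carrier_tg: "tg i j r \<in> fa_carrier"
  and fa_carrier_one: "fa_one \<in> fa_carrier"
  and fa_carrier_zero: "fa_zero \<in> fa_carrier"
  and fa_carrier_kdelta: "kdelta i j \<in> fa_carrier"
  by (simp_all add: fa_carrier_iff fa_supp_tg fa_supp_one fa_supp_zero kdelta_def)

lemma fa_eval_tg: "fa_eval T (tg i j r) = T i j r"
  unfolding fa_eval_def fa_supp_tg by (simp add: word_eval_def gen_eval_def tg_def)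

lemma fa_eval_one: "fa_eval T fa_one = 1"
  unfolding fa_eval_def fa_supp_one by (simp add: word_eval_def fa_one_def)

lemma fa_eval_zero: "fa_eval T fa_zero = 0"
  by (simp add: fa_eval_def fa_supp_zero)

lemma fa_eval_kdelta: "fa_eval T (kdelta i j) = (if i = j then 1 else 0)"
  by (simp add: kdelta_def fa_eval_one fa_eval_zero)

lemma fa_eval_add:
  assumes "f \<in> fa_carrier" "g \<in> fa_carrier"
  shows "fa_eval T (fa_add f g) = fa_eval T f + fa_eval T g"
proof -
  let ?S = "fa_supp f \<union> fa_supp g"
  have S: "finite ?S"
    using assms by (simp add: fa_carrier_iff)
  show ?thesis
    using fa_supp_add
    by (simp add: fa_eval_superset[OF S] fa_add_def of_complex_add distrib_right sum.distrib)
qed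

lemma fa_eval_sub:
  assumes "f \<in> fa_carrier" "g \<in> fa_carrier"
  shows "fa_eval T (fa_sub f g) = fa_eval T f - fa_eval T g"
proof -
  let ?S = "fa_supp f \<union> fa_supp g"
  have S: "finite ?S"
    using assms by (simp add: fa_carrier_iff)
  show ?thesis
    using fa_supp_sub
    by (simp add: fa_eval_superset[OF S] fa_sub_def of_complex_diff left_diff_distrib sum_subtractf)
qed

lemma fa_eval_smult:
  assumes "f \<in> fa_carrier"
  shows "fa_eval T (fa_smult c f) = of_complex c * fa_eval T f"
proof -
  have S: "finite (fa_supp f)"
    using assms by (simp add: fa_carrier_iff)
  show ?thesis
    using fa_supp_smult
    by (simp add: fa_eval_superset[OF S] fa_smult_def of_complex_mult sum_distrib_left mult.assoc)
qed

lemma sum_list_splittings: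
  fixes h :: "'a list \<Rightarrow> 'a list \<Rightarrow> 'b::comm_monoid_add"
  assumes "finite S" "(\<lambda>(u, v). u @ v) ` (A \<times> B) \<subseteq> S"
    and "\<And>u v. (u, v) \<notin> A \<times> B \<Longrightarrow> h u v = 0"
  shows "(\<Sum>w\<in>S. \<Sum>k\<le>length w. h (take k w) (drop k w)) = (\<Sum>(u, v)\<in>A \<times> B. h u v)"
proof -
  let ?split = "\<lambda>(w, k). (take k w, drop k w)"
  let ?P = "Sigma S (\<lambda>w. {..length w})"
  have inj: "inj_on ?split ?P"
  proof (rule inj_onI)
    fix p q
    assume "p \<in> ?P" "q \<in> ?P" "?split p = ?split q"
    then show "p = q"
      by (cases p; cases q) (auto, metis append_take_drop_id, metis length_take min.absorb2)
  qed
  have cover: "A \<times> B \<subseteq> ?split ` ?P"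
  proof
    fix p
    assume p: "p \<in> A \<times> B"
    then obtain u v where uv: "p = (u, v)" "u \<in> A" "v \<in> B"
      by blast
    then have "u @ v \<in> S"
      using assms(2) by force
    with uv show "p \<in> ?split ` ?P"
      by (intro image_eqI[of _ _ "(u @ v, length u)"]) auto
  qed
  have "(\<Sum>(u, v)\<in>A \<times> B. h u v) = (\<Sum>(u, v)\<in>?split ` ?P. h u v)"
    using assms(1,3) cover by (intro sum.mono_neutral_left) auto
  also have "\<dots> = (\<Sum>(w, k)\<in>?P. h (take k w) (drop k w))"
    by (subst sum.reindex[OF inj]) (simp add: case_prod_unfold)
  also have "\<dots> = (\<Sum>w\<in>S. \<Sum>k\<le>length w. h (take k w) (drop k w))"
    using assms(1) by (simp add: sum.Sigma)
  finally show ?thesis ..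
qed

lemma word_eval_append: "word_eval T (u @ v) = word_eval T u * word_eval T v"
  by (simp add: word_eval_def)

lemma fa_eval_mult:
  assumes "f \<in> fa_carrier" "g \<in> fa_carrier"
  shows "fa_eval T (fa_mult f g) = fa_eval T f * fa_eval T g"
proof -
  define S where "S = (\<lambda>(u, v). u @ v) ` (fa_supp f \<times> fa_supp g)"
  define h where "h u v = of_complex (f u) * word_eval T u * (of_complex (g v) * word_eval T v)"
    for u v
  have fin: "finite (fa_supp f)" "finite (fa_supp g)"
    using assms by (simp_all add: fa_carrier_iff)
  then have "finite S"
    by (simp add: S_def)
  have "fa_eval T (fa_mult f g) = (\<Sum>w\<in>S. of_complex (fa_mult f g w) * word_eval T w)"
    using fa_supp_mult \<open>finite S\<close> by (simp add: fa_eval_superset S_def)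
  also have "\<dots> = (\<Sum>w\<in>S. \<Sum>k\<le>length w. h (take k w) (drop k w))"
  proof (intro sum.cong refl)
    fix w
    have "of_complex (f u * g v) * word_eval T (u @ v) = h u v" for u v
      unfolding h_def word_eval_append by (metis mult.assoc of_complex_commute of_complex_mult)
    from this[of "take k w" "drop k w" for k]
    show "of_complex (fa_mult f g w) * word_eval T w = (\<Sum>k\<le>length w. h (take k w) (drop k w))"
      by (simp add: fa_mult_def of_complex_sum sum_distrib_right)
  qed
  also have "\<dots> = (\<Sum>(u, v)\<in>fa_supp f \<times> fa_supp g. h u v)"
    using \<open>finite S\<close> by (rule sum_list_splittings) (auto simp: S_def h_def fa_supp_def)
  also have "\<dots> = fa_eval T f * fa_eval T g"
    by (simp add: fa_eval_def h_def sum_product sum.cartesian_product)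
  finally show ?thesis .
qed

lemma yangian_rels_eval:
  assumes "yangian_hom T" "x \<in> yangian_rels"
  shows "x \<in> fa_carrier \<and> fa_eval T x = 0"
  using assms(2) unfolding yangian_rels_def
proof (elim UnE CollectE exE conjE)
  fix i j
  assume "x = fa_sub (tg i j 0) (kdelta i j)"
  then show ?thesis
    using assms(1)
    by (simp add: fa_carrier_sub fa_carrier_tg fa_carrier_kdelta fa_eval_sub fa_eval_tg
        fa_eval_kdelta yangian_hom_def)
next
  fix i j k l r s
  assume "x = fa_sub
      (fa_sub (fa_comm (tg i j (Suc r)) (tg k l s)) (fa_comm (tg i j r) (tg k l (Suc s))))
      (fa_sub (fa_mult (tg k j r) (tg i l s)) (fa_mult (tg k j s) (tg i l r)))"
  then show ?thesis
    using assms(1)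
    by (simp add: fa_carrier_sub fa_carrier_tg fa_carrier_comm fa_carrier_mult fa_eval_sub
        fa_eval_mult fa_eval_tg fa_comm_def yangian_hom_def)
qed

lemma two_sided_ideal_eval:
  assumes "\<And>x. x \<in> R \<Longrightarrow> x \<in> fa_carrier \<and> fa_eval T x = 0" "x \<in> two_sided_ideal R"
  shows "x \<in> fa_carrier \<and> fa_eval T x = 0"
  using assms(2)
proof (induction rule: two_sided_ideal.induct)
  case (gen x a b)
  then show ?case
    using assms(1)[OF gen(1)] by (simp add: fa_carrier_mult fa_eval_mult)
qed (simp_all add: fa_carrier_zero fa_eval_zero fa_carrier_add fa_eval_add fa_carrier_smult
    fa_eval_smult)

lemma yangian_ideal_eval: "yangian_hom T \<Longrightarrow> x \<in> yangian_ideal \<Longrightarrow> x \<in> fa_carrier \<and> fa_eval T x = 0"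
  unfolding yangian_ideal_def by (rule two_sided_ideal_eval) (auto dest: yangian_rels_eval)

definition act_vac :: "(idx \<Rightarrow> idx \<Rightarrow> nat \<Rightarrow> endo) \<Rightarrow> fa \<Rightarrow> vec" where
  "act_vac T x = endo_apply (fa_eval T x) vac"

lemma left_ideal_act_vac:
  assumes "\<And>x. x \<in> R \<Longrightarrow> x \<in> fa_carrier \<and> act_vac T x = 0" "x \<in> left_ideal R"
  shows "x \<in> fa_carrier \<and> act_vac T x = 0"
  using assms(2)
proof (induction rule: left_ideal.induct)
  case (gen x a)
  then show ?case
    using assms(1)[OF gen(1)] by (simp add: fa_carrier_mult fa_eval_mult act_vac_def)
qed (simp_all add: act_vac_def fa_carrier_zero fa_eval_zero fa_carrier_add fa_eval_add
    fa_carrier_smult fa_eval_smult flip: zero_fun_def)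

lemma verma_ideal_act_vac:
  assumes "yangian_hom T" "highest_weight T (hw_series lam1) (hw_series lam2)"
    and "x \<in> verma_ideal lam1 lam2"
  shows "x \<in> fa_carrier \<and> act_vac T x = 0"
proof (rule left_ideal_act_vac[OF _ assms(3)[unfolded verma_ideal_def]])
  have "hw_series lam $ r = lam r" if "r \<ge> 1" for lam r
    using that by (simp add: hw_series_def)
  then show "x \<in> fa_carrier \<and> act_vac T x = 0"
    if "x \<in> yangian_ideal \<union> {tg I1 I2 r |r. 1 \<le> r} \<union>
      {fa_sub (tg I1 I1 r) (fa_smult (lam1 r) fa_one) |r. 1 \<le> r} \<union>
      {fa_sub (tg I2 I2 r) (fa_smult (lam2 r) fa_one) |r. 1 \<le> r}" for x
    using that yangian_ideal_eval[OF assms(1)] assms(2)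
    by (auto simp: act_vac_def highest_weight_def fa_carrier_tg fa_carrier_sub fa_carrier_smult
        fa_carrier_one fa_eval_tg fa_eval_sub fa_eval_smult fa_eval_one)
qed

lemma qcoset_self: "fa_zero \<in> L \<Longrightarrow> x \<in> qcoset L x"
  unfolding qcoset_def by (intro CollectI exI[of _ fa_zero]) (simp add: fa_add_def fa_zero_def)

lemma act_vac_qcoset_eq:
  assumes L: "\<And>x. x \<in> L \<Longrightarrow> x \<in> fa_carrier \<and> act_vac T x = 0" and "fa_zero \<in> L"
    and "qcoset L x = qcoset L y" "y \<in> fa_carrier"
  shows "act_vac T x = act_vac T y"
proof -
  have "x \<in> qcoset L y"
    using qcoset_self[OF \<open>fa_zero \<in> L\<close>, of x] assms(3) by simp
  then obtain l where "x = fa_add y l" "l \<in> L"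
    by (auto simp: qcoset_def)
  then show ?thesis
    using L[of l] \<open>y \<in> fa_carrier\<close> by (simp add: act_vac_def fa_eval_add)
qed

lemma kernel_is_submodule:
  assumes L: "\<And>x. x \<in> L \<Longrightarrow> x \<in> fa_carrier \<and> act_vac T x = 0" and "fa_zero \<in> L"
  shows "is_submodule L {qcoset L x | x. x \<in> fa_carrier \<and> act_vac T x = 0}"
    (is "is_submodule L ?N")
proof -
  have kernelD: "act_vac T x = 0" if x: "qcoset L x \<in> ?N" for x
  proof -
    obtain y where "qcoset L x = qcoset L y" "y \<in> fa_carrier" "act_vac T y = 0"
      using x by blast
    with act_vac_qcoset_eq[OF L \<open>fa_zero \<in> L\<close>, of x y] show ?thesis
      by simp
  qed
  have kernelI: "qcoset L x \<in> ?N" if "x \<in> fa_carrier" "act_vac T x = 0" for x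
    using that by blast
  show ?thesis
    unfolding is_submodule_def
  proof (intro conjI ballI allI impI)
    show "?N \<subseteq> qmodule L"
      unfolding qmodule_def by blast
    show "qcoset L fa_zero \<in> ?N"
      by (intro kernelI) (simp_all add: fa_carrier_zero act_vac_def fa_eval_zero)
    show "qcoset L (fa_add x y) \<in> ?N"
      if "x \<in> fa_carrier" "y \<in> fa_carrier" "qcoset L x \<in> ?N" "qcoset L y \<in> ?N" for x y
      using that(1,2) kernelD[OF that(3)] kernelD[OF that(4)]
      by (intro kernelI) (simp_all add: fa_carrier_add act_vac_def fa_eval_add)
    show "qcoset L (fa_smult c x) \<in> ?N" if "x \<in> fa_carrier" "qcoset L x \<in> ?N" for c x
      using that(1) kernelD[OF that(2)]
      by (intro kernelI) (simp_all add: fa_carrier_smult act_vac_def fa_eval_smult endo_apply_scale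
          flip: zero_fun_def)
    show "qcoset L (fa_mult a x) \<in> ?N"
      if "a \<in> fa_carrier" "x \<in> fa_carrier" "qcoset L x \<in> ?N" for a x
      using that(1,2) kernelD[OF that(3)]
      by (intro kernelI) (simp_all add: fa_carrier_mult act_vac_def fa_eval_mult)
  qed
qed

lemma vac_nonzero: "vac \<noteq> 0"
proof
  assume "vac = 0"
  then have "vac (\<lambda>_. 0) = 0"
    by simp
  then show False
    by (simp add: vac_def)
qed

lemma qmodule_reducible_if_separated:
  assumes LA: "\<And>x. x \<in> L \<Longrightarrow> x \<in> fa_carrier \<and> act_vac TA x = 0"
    and LB: "\<And>x. x \<in> L \<Longrightarrow> x \<in> fa_carrier \<and> act_vac TB x = 0"
    and "fa_zero \<in> L" "y \<in> fa_carrier" "act_vac TB y = 0" "act_vac TA y \<noteq> 0"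
  shows "qmodule_reducible L"
proof -
  define N where "N = {qcoset L x | x. x \<in> fa_carrier \<and> act_vac TB x = 0}"
  have "qcoset L y \<noteq> qcoset L fa_zero"
    using act_vac_qcoset_eq[OF LA \<open>fa_zero \<in> L\<close>, of y fa_zero] assms(6)
    by (auto simp: fa_carrier_zero act_vac_def fa_eval_zero)
  then have "N \<noteq> {qcoset L fa_zero}"
    using assms(4,5) by (auto simp: N_def)
  moreover have "qcoset L fa_one \<notin> N"
    using act_vac_qcoset_eq[OF LB \<open>fa_zero \<in> L\<close>, of fa_one] vac_nonzero
    by (auto simp: N_def act_vac_def fa_eval_one)
  then have "N \<noteq> qmodule L"
    using fa_carrier_one by (auto simp: qmodule_def)
  ultimately show ?thesis
    unfolding qmodule_reducible_def N_def
    using kernel_is_submodule[OF LB \<open>fa_zero \<in> L\<close>] by blast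
qed

section \<open>Factorisation of a rational ratio of highest weights\<close>

lemma fps_of_poly_prod_linear:
  "\<exists>c m bs. c \<noteq> 0 \<and> 0 \<notin> set bs \<and>
     fps_of_poly (\<Prod>x\<leftarrow>rs. [:- x, 1:]) = fps_const c * fps_X ^ m * lin_factors bs"
proof (induction rs)
  case Nil
  then show ?case
    by (intro exI[of _ 1] exI[of _ 0] exI[of _ "[]"]) simp
next
  case (Cons x rs)
  then obtain c m bs where IH: "c \<noteq> 0" "0 \<notin> set bs"
    "fps_of_poly (\<Prod>x\<leftarrow>rs. [:- x, 1:]) = fps_const c * fps_X ^ m * lin_factors bs"
    by blast
  have "fps_of_poly (\<Prod>x\<leftarrow>x # rs. [:- x, 1:]) =
      fps_of_poly [:- x, 1:] * fps_of_poly (\<Prod>x\<leftarrow>rs. [:- x, 1:])"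
    by (simp only: list.map prod_list.Cons fps_of_poly_mult)
  then have step: "fps_of_poly (\<Prod>x\<leftarrow>x # rs. [:- x, 1:]) =
      (fps_X - fps_const x) * (fps_const c * fps_X ^ m * lin_factors bs)"
    by (simp only: IH(3) fps_of_poly_linear) (simp flip: fps_const_neg)
  show ?case
  proof (cases "x = 0")
    case True
    then show ?thesis
      using IH
      by (intro exI[of _ c] exI[of _ "Suc m"] exI[of _ bs]) (unfold step, simp add: mult_ac)
  next
    case False
    then have "fps_X - fps_const x = fps_const (- x) * (1 + fps_const (- 1 / x) * fps_X)"
      by (simp add: algebra_simps flip: fps_const_mult fps_const_neg)
    then show ?thesis
      using IH False
      by (intro exI[of _ "- x * c"] exI[of _ m] exI[of _ "- 1 / x # bs"])
        (unfold step, simp add: mult_ac)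
  qed
qed

lemma fps_of_poly_factor:
  fixes p :: "complex poly"
  assumes "p \<noteq> 0"
  obtains c m bs
  where "c \<noteq> 0" "0 \<notin> set bs" "fps_of_poly p = fps_const c * fps_X ^ m * lin_factors bs"
proof -
  obtain rs where rs: "mset rs = proots p"
    using ex_mset by blast
  have "p = smult (lead_coeff p) (\<Prod>x\<in>#proots p. [:- x, 1:])"
    by (rule complex_poly_decompose_multiset[symmetric])
  also have "(\<Prod>x\<in>#proots p. [:- x, 1:]) = (\<Prod>x\<leftarrow>rs. [:- x, 1:])"
    by (simp flip: rs prod_mset_prod_list)
  finally have "fps_of_poly p = fps_const (lead_coeff p) * fps_of_poly (\<Prod>x\<leftarrow>rs. [:- x, 1:])"
    by (metis fps_of_poly_smult)
  moreover obtain c m bs where "c \<noteq> 0" "0 \<notin> set bs"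
    "fps_of_poly (\<Prod>x\<leftarrow>rs. [:- x, 1:]) = fps_const c * fps_X ^ m * lin_factors bs"
    using fps_of_poly_prod_linear by blast
  ultimately show thesis
    using assms
    by (intro that[where c = "lead_coeff p * c" and m = m and bs = bs]) (simp_all add: mult_ac)
qed

lemma fps_X_power_mult_cancel:
  fixes U V :: "'a::idom fps"
  assumes eq: "fps_X ^ m * U = fps_X ^ n * V" and "U $ 0 \<noteq> 0" "V $ 0 \<noteq> 0"
  shows "m = n \<and> U = V"
proof -
  have "U \<noteq> 0" "V \<noteq> 0"
    using assms(2,3) by auto
  then have "subdegree (fps_X ^ m * U) = m" "subdegree (fps_X ^ n * V) = n"
    using assms(2,3) by simp_all
  then have "m = n"
    using eq by simp
  with eq show ?thesis
    by simp
qed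

lemma rational_fps_factor:
  fixes G :: "complex fps"
  assumes "G $ 0 = 1" "Q \<noteq> 0" "fps_of_poly Q * G = fps_of_poly P"
  obtains as bs where "0 \<notin> set as" "0 \<notin> set bs" "lin_factors bs * G = lin_factors as"
proof -
  have "G \<noteq> 0"
    using assms(1) by (metis fps_zero_nth zero_neq_one)
  with assms(2,3) have "P \<noteq> 0"
    by (metis fps_of_poly_0 fps_of_poly_eq_iff no_zero_divisors)
  obtain cQ mQ bs where Q: "cQ \<noteq> 0" "0 \<notin> set bs"
    "fps_of_poly Q = fps_const cQ * fps_X ^ mQ * lin_factors bs"
    by (rule fps_of_poly_factor[OF assms(2)])
  obtain cP mP as where P: "cP \<noteq> 0" "0 \<notin> set as"
    "fps_of_poly P = fps_const cP * fps_X ^ mP * lin_factors as"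
    by (rule fps_of_poly_factor[OF \<open>P \<noteq> 0\<close>])
  have "fps_X ^ mQ * (fps_const cQ * lin_factors bs * G) =
      fps_X ^ mP * (fps_const cP * lin_factors as)"
    using assms(3) unfolding P(3) Q(3) by (simp add: mult_ac)
  then have eq: "fps_const cQ * lin_factors bs * G = fps_const cP * lin_factors as"
    by (rule fps_X_power_mult_cancel[THEN conjunct2])
      (use Q(1) P(1) assms(1) lin_factors_nth_0 in \<open>simp_all add: fps_mult_nth_0\<close>)
  have "(fps_const cQ * lin_factors bs * G) $ 0 = (fps_const cP * lin_factors as) $ 0"
    by (simp only: eq)
  then have "cQ = cP"
    using assms(1) lin_factors_nth_0 by (simp add: fps_mult_nth_0)
  with eq Q(1) have "lin_factors bs * G = lin_factors as"
    by (simp add: mult.assoc)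
  with P(2) Q(2) show thesis
    by (rule that)
qed

lemma lin_factors_append_zeros: "lin_factors (cs @ replicate k 0) = lin_factors cs"
  by (induction cs) (simp_all add: lin_factors_def)

lemma lin_factors_pairs:
  assumes "0 \<notin> set as" "0 \<notin> set bs"
  obtains l
  where "lin_factors (map fst l) = lin_factors as" "lin_factors (map snd l) = lin_factors bs"
    "prod_list (map fst l) \<noteq> 0 \<or> prod_list (map snd l) \<noteq> 0"
proof -
  define as' where "as' = as @ replicate (length bs - length as) 0"
  define bs' where "bs' = bs @ replicate (length as - length bs) 0"
  have len: "length as' = length bs'"
    by (simp add: as'_def bs'_def)
  have "prod_list as' \<noteq> 0 \<or> prod_list bs' \<noteq> 0"
  proof (cases "length as \<le> length bs")
    case True
    then show ?thesis
      using assms(2) by (simp add: bs'_def prod_list_zero_iff)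
  next
    case False
    then show ?thesis
      using assms(1) by (simp add: as'_def prod_list_zero_iff)
  qed
  with len show thesis
    by (intro that[of "zip as' bs'"]) (simp_all add: as'_def bs'_def lin_factors_append_zeros)
qed

lemma hw_series_factor:
  assumes "is_rational_expansion (hw_series lam1 / hw_series lam2)"
  obtains F l where "F $ 0 = 1"
    "hw_series lam1 = F * lin_factors (map fst l)" "hw_series lam2 = F * lin_factors (map snd l)"
    "prod_list (map fst l) \<noteq> 0 \<or> prod_list (map snd l) \<noteq> 0"
proof -
  define H1 H2 where "H1 = hw_series lam1" and "H2 = hw_series lam2"
  define G where "G = H1 / H2"
  have H0: "H1 $ 0 = 1" "H2 $ 0 = 1"
    by (simp_all add: H1_def H2_def hw_series_def)
  then have G: "G = H1 * inverse H2" "G $ 0 = 1"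
    by (simp_all add: G_def fps_divide_unit)
  obtain P Q :: "complex poly" where "Q \<noteq> 0" "fps_of_poly Q * G = fps_of_poly P"
    using assms unfolding is_rational_expansion_def G_def H1_def H2_def by blast
  then obtain as bs where ab: "0 \<notin> set as" "0 \<notin> set bs" "lin_factors bs * G = lin_factors as"
    using G(2) by (elim rational_fps_factor)
  obtain l where l: "lin_factors (map fst l) = lin_factors as"
    "lin_factors (map snd l) = lin_factors bs"
    "prod_list (map fst l) \<noteq> 0 \<or> prod_list (map snd l) \<noteq> 0"
    by (rule lin_factors_pairs[OF ab(1,2)])
  define F where "F = H2 * inverse (lin_factors bs)"
  have "inverse (lin_factors bs) * lin_factors bs = 1" "inverse H2 * H2 = 1"
    by (simp_all add: inverse_mult_eq_1 lin_factors_nth_0 H0)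
  then have H2: "H2 = F * lin_factors bs" and "H1 = G * H2"
    by (simp_all add: F_def G(1) mult.assoc)
  then have "H1 = F * lin_factors as"
    by (simp add: mult_ac flip: ab(3))
  moreover have "F $ 0 = 1"
    by (simp add: F_def H0 lin_factors_nth_0)
  ultimately show thesis
    using H2 l by (intro that[of F l]) (simp_all add: H1_def H2_def)
qed

section \<open>The separating element\<close>

text \<open>The coefficient of \<open>u\<^sup>-\<^sup>N\<close> in \<open>H(u\<^sup>-\<^sup>1) t\<^sub>2\<^sub>1(u)\<close>.\<close>

definition t21_coeff :: "complex fps \<Rightarrow> nat \<Rightarrow> fa" where
  "t21_coeff H N = (\<lambda>w. \<Sum>k=0..N. if w = [Gen I2 I1 (N - k)] then H $ k else 0)"

lemma fa_supp_t21_coeff: "fa_supp (t21_coeff H N) \<subseteq> (\<lambda>k. [Gen I2 I1 (N - k)]) ` {0..N}"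
proof
  fix w
  assume "w \<in> fa_supp (t21_coeff H N)"
  then obtain k where "k \<in> {0..N}" "(if w = [Gen I2 I1 (N - k)] then H $ k else 0) \<noteq> 0"
    unfolding fa_supp_def t21_coeff_def by (auto intro: sum.not_neutral_contains_not_neutral)
  then show "w \<in> (\<lambda>k. [Gen I2 I1 (N - k)]) ` {0..N}"
    by (auto split: if_splits)
qed

lemma fa_carrier_t21_coeff: "t21_coeff H N \<in> fa_carrier"
  using fa_supp_t21_coeff by (metis fa_carrier_iff finite_atLeastAtMost finite_imageI finite_subset)

lemma fa_eval_t21_coeff:
  "fa_eval T (t21_coeff H N) = (\<Sum>k=0..N. of_complex (H $ k) * T I2 I1 (N - k))"
proof -
  have inj: "inj_on (\<lambda>k. [Gen I2 I1 (N - k)]) {0..N}"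
    by (rule inj_onI) auto
  have coeff: "t21_coeff H N [Gen I2 I1 (N - k)] = H $ k" if "k \<le> N" for k
  proof -
    have "t21_coeff H N [Gen I2 I1 (N - k)] = (\<Sum>k'\<in>{k}. if k = k' then H $ k' else 0)"
      unfolding t21_coeff_def using that by (intro sum.mono_neutral_cong_right) auto
    then show ?thesis
      by simp
  qed
  have "fa_eval T (t21_coeff H N) =
      (\<Sum>w\<in>(\<lambda>k. [Gen I2 I1 (N - k)]) ` {0..N}. of_complex (t21_coeff H N w) * word_eval T w)"
    by (rule fa_eval_superset) (simp_all add: fa_supp_t21_coeff)
  also have "\<dots> = (\<Sum>k=0..N. of_complex (H $ k) * T I2 I1 (N - k))"
    by (simp add: sum.reindex[OF inj] coeff word_eval_def gen_eval_def)
  finally show ?thesis .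
qed

definition endo_fps :: "complex fps \<Rightarrow> endo fps" where
  "endo_fps F = Abs_fps (\<lambda>n. of_complex (F $ n))"

lemma endo_fps_mult: "endo_fps F * endo_fps G = endo_fps (F * G)"
  by (rule fps_ext) (simp add: endo_fps_def fps_mult_nth of_complex_sum of_complex_mult)

lemma endo_fps_1: "endo_fps 1 = 1"
  by (rule fps_ext) (simp add: endo_fps_def)

lemma act_vac_t21_coeff_scalar_twist:
  assumes "F $ 0 = 1"
  shows "act_vac (fam_mult (scalar_fam F) S) (t21_coeff (inverse F) N) = endo_apply (S I2 I1 N) vac"
proof -
  have "Abs_fps (fam_mult (scalar_fam F) S I2 I1) = endo_fps F * Abs_fps (S I2 I1)"
    by (rule fps_ext) (simp add: fam_mult_def fps_mult_nth UNIV_idx scalar_fam_def endo_fps_def)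
  moreover have "fa_eval (fam_mult (scalar_fam F) S) (t21_coeff (inverse F) N) =
      (endo_fps (inverse F) * Abs_fps (fam_mult (scalar_fam F) S I2 I1)) $ N"
    by (simp add: fa_eval_t21_coeff fps_mult_nth endo_fps_def)
  ultimately have "fa_eval (fam_mult (scalar_fam F) S) (t21_coeff (inverse F) N) =
      (endo_fps (inverse F) * endo_fps F * Abs_fps (S I2 I1)) $ N"
    by (simp add: mult.assoc)
  also have "\<dots> = S I2 I1 N"
    using assms by (simp add: endo_fps_mult inverse_mult_eq_1 endo_fps_1)
  finally show ?thesis
    by (simp add: act_vac_def)
qed

lemma verma_ideal_act_vac_scalar_twist:
  assumes "F $ 0 = 1" "yangian_hom S" "highest_weight S P1 P2"
    and "hw_series lam1 = F * P1" "hw_series lam2 = F * P2" "x \<in> verma_ideal lam1 lam2"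
  shows "x \<in> fa_carrier \<and> act_vac (fam_mult (scalar_fam F) S) x = 0"
proof (rule verma_ideal_act_vac[OF _ _ assms(6)])
  show "yangian_hom (fam_mult (scalar_fam F) S)"
    using assms(1,2)
    by (intro yangian_hom_fam_mult yangian_hom_scalar_fam commuting_fams_scalar_fam)
  show "highest_weight (fam_mult (scalar_fam F) S) (hw_series lam1) (hw_series lam2)"
    unfolding assms(4,5) using assms(3)
    by (intro highest_weight_fam_mult highest_weight_scalar_fam commuting_fams_scalar_fam)
qed

theorem proposition3p3:
  fixes lam1 lam2 :: "nat \<Rightarrow> complex"
  assumes "is_rational_expansion (hw_series lam1 / hw_series lam2)"
  shows "qmodule_reducible (verma_ideal lam1 lam2)"
proof -
  obtain F l where F: "F $ 0 = 1"
    and hw: "hw_series lam1 = F * lin_factors (map fst l)"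
      "hw_series lam2 = F * lin_factors (map snd l)"
    and top: "prod_list (map fst l) \<noteq> 0 \<or> prod_list (map snd l) \<noteq> 0"
    using hw_series_factor[OF assms] .
  obtain S where S: "yangian_hom S"
    "highest_weight S (lin_factors (map fst l)) (lin_factors (map snd l))"
    "endo_apply (S I2 I1 (Suc (length l))) vac \<noteq> 0"
    using exists_rep_top_21_nonzero[OF top] .
  let ?sep = "t21_coeff (inverse F) (Suc (length l))"
  have "act_vac (fam_mult (scalar_fam F) (eval_tensor l)) ?sep = 0"
    using fam_deg_le_eval_tensor[of l]
    by (simp add: act_vac_t21_coeff_scalar_twist[OF F] fam_deg_le_def)
  moreover have "act_vac (fam_mult (scalar_fam F) S) ?sep \<noteq> 0"
    using S(3) by (simp add: act_vac_t21_coeff_scalar_twist[OF F])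
  moreover have "fa_zero \<in> verma_ideal lam1 lam2"
    unfolding verma_ideal_def by (rule left_ideal.zero)
  ultimately show ?thesis
    using verma_ideal_act_vac_scalar_twist[OF F S(1,2) hw]
      verma_ideal_act_vac_scalar_twist[OF F yangian_hom_eval_tensor highest_weight_eval_tensor hw]
      fa_carrier_t21_coeff
    by (intro qmodule_reducible_if_separated[where y = ?sep]) blast+
qed

end
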